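(* Let $A,B\colon\mathbb{R}_{>0}\to\mathbb{R}_{>0}$ be continuous functions that are eventually monotone decreasing and satisfy $\lim_{x\to\infty}A(x)=\lim_{x\to\infty}B(x)=0$. Let $(a_t)_{t\ge1}$ and $(b_t)_{t\ge1}$ be sequences in $\mathbb{R}_{>0}$ satisfying $a_{t+1}=a_t+A(a_t)$ and $b_{t+1}=b_t+B(b_t)$ for all $t$. If $\lim_{x\to\infty}A(x)/B(x)=1$, then $\lim_{t\to\infty}a_t/b_t=1$. *)

theory Defs
  imports "HOL-Analysis.Analysis"
begin

end

theory Submission
  imports Defs
begin

text \<open>
  Both orbits tend to infinity, since a bounded increasing orbit would converge to a point
  \<open>L > 0\<close> with \<open>F L = 0\<close>. For \<open>l > 1\<close>, eventually \<open>A \<le> l B\<close>, and the monotonicity of \<open>B\<close>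
  makes \<open>l b\<^sub>t\<close> a supersolution of the \<open>A\<close>-recurrence. Because \<open>A\<close> is eventually decreasing,
  an exact orbit can gain on a supersolution only while it lies below it, and then by at most a
  bounded amount; hence \<open>a\<^sub>t \<le> l b\<^sub>t + K\<close>, so \<open>limsup a\<^sub>t / b\<^sub>t \<le> l\<close>. Exchanging the roles of
  \<open>A\<close> and \<open>B\<close> gives the lower bound.
\<close>

lemma orbit_tendsto_at_top:
  fixes F :: "real \<Rightarrow> real" and s :: "nat \<Rightarrow> real"
  assumes cont: "continuous_on {0<..} F" and F_pos: "\<And>x. x > 0 \<Longrightarrow> F x > 0"
    and s_pos: "\<And>t. s t > 0" and s_rec: "\<And>t. s (Suc t) = s t + F (s t)"
  shows "filterlim s at_top sequentially"
proof -
  have inc: "incseq s"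
    by (rule incseq_SucI) (use s_rec s_pos F_pos in \<open>auto simp: less_imp_le\<close>)
  have unbounded: "\<exists>t. Z \<le> s t" for Z
  proof (rule ccontr)
    assume "\<nexists>t. Z \<le> s t"
    then have "s t \<le> Z" for t by (meson le_cases)
    then obtain L where L: "s \<longlonglongrightarrow> L"
      using incseq_convergent[OF inc] by blast
    have "0 < s 0" by (rule s_pos)
    also have "s 0 \<le> L" using inc L by (simp add: incseq_le)
    finally have "0 < L" .
    then have "isCont F L"
      using cont by (simp add: continuous_on_eq_continuous_at)
    then have "(\<lambda>t. F (s t)) \<longlonglongrightarrow> F L"
      using L by (rule isCont_tendsto_compose)
    moreover have "(\<lambda>t. s (Suc t) - s t) \<longlonglongrightarrow> L - L"
      using L by (intro tendsto_diff LIMSEQ_Suc)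
    then have "(\<lambda>t. F (s t)) \<longlonglongrightarrow> 0"
      by (simp add: s_rec)
    ultimately have "F L = 0" by (rule LIMSEQ_unique)
    with F_pos \<open>0 < L\<close> show False by force
  qed
  show ?thesis
    unfolding filterlim_at_top eventually_sequentially
    using unbounded inc by (meson incseqD order_trans)
qed

lemma orbit_minus_supersolution_bounded:
  fixes F :: "real \<Rightarrow> real" and a c :: "nat \<Rightarrow> real"
  assumes F_decr: "\<And>x y. x\<^sub>0 \<le> x \<Longrightarrow> x \<le> y \<Longrightarrow> F y \<le> F x"
    and F_nonneg: "\<And>x. x\<^sub>0 \<le> x \<Longrightarrow> 0 \<le> F x"
    and above: "\<And>t. T \<le> t \<Longrightarrow> x\<^sub>0 \<le> a t \<and> x\<^sub>0 \<le> c t"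
    and a_rec: "\<And>t. T \<le> t \<Longrightarrow> a (Suc t) = a t + F (a t)"
    and c_rec: "\<And>t. T \<le> t \<Longrightarrow> c t + F (c t) \<le> c (Suc t)"
    and "T \<le> t"
  shows "a t - c t \<le> max (a T - c T) (F x\<^sub>0)"
  using \<open>T \<le> t\<close>
proof (induction t rule: dec_induct)
  case base
  then show ?case by simp
next
  case (step t)
  note recs = a_rec[OF step.hyps(1)] c_rec[OF step.hyps(1)]
  have "x\<^sub>0 \<le> a t" "x\<^sub>0 \<le> c t" using above step.hyps(1) by auto
  show ?case
  proof (cases "a t \<le> c t")
    case True
    then show ?thesis
      using recs F_decr[OF order_refl \<open>x\<^sub>0 \<le> a t\<close>] F_nonneg[OF \<open>x\<^sub>0 \<le> c t\<close>]
      by linarith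
  next
    case False
    then have "F (a t) \<le> F (c t)" using F_decr \<open>x\<^sub>0 \<le> c t\<close> by simp
    then show ?thesis using recs step.IH by linarith
  qed
qed

lemma scaled_orbit_step_supersolution:
  fixes A B :: "real \<Rightarrow> real" and l x y :: real
  assumes "0 \<le> l" and B_decr: "\<And>u v. x\<^sub>0 \<le> u \<Longrightarrow> u \<le> v \<Longrightarrow> B v \<le> B u"
    and A_le: "\<And>u. x\<^sub>0 \<le> u \<Longrightarrow> A u \<le> l * B u"
    and "x\<^sub>0 \<le> x" and "x \<le> l * x" and y: "y = x + B x"
  shows "l * x + A (l * x) \<le> l * y"
proof -
  have "A (l * x) \<le> l * B (l * x)"
    using A_le \<open>x\<^sub>0 \<le> x\<close> \<open>x \<le> l * x\<close> by simp
  also have "\<dots> \<le> l * B x"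
    using B_decr \<open>x\<^sub>0 \<le> x\<close> \<open>x \<le> l * x\<close> \<open>0 \<le> l\<close> by (simp add: mult_left_mono)
  finally show ?thesis
    by (simp add: y distrib_left)
qed

lemma orbit_le_scaled_orbit_plus_const:
  fixes A B :: "real \<Rightarrow> real" and a b :: "nat \<Rightarrow> real" and l :: real
  assumes "1 \<le> l"
    and decA: "\<exists>x0. \<forall>x y. x0 \<le> x \<and> x \<le> y \<longrightarrow> A y \<le> A x"
    and decB: "\<exists>x0. \<forall>x y. x0 \<le> x \<and> x \<le> y \<longrightarrow> B y \<le> B x"
    and A_nonneg: "\<forall>\<^sub>F x in at_top. 0 \<le> A x"
    and A_le: "\<forall>\<^sub>F x in at_top. A x \<le> l * B x"
    and a_inf: "filterlim a at_top sequentially" and b_inf: "filterlim b at_top sequentially"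
    and a_rec: "\<forall>\<^sub>F t in sequentially. a (Suc t) = a t + A (a t)"
    and b_rec: "\<forall>\<^sub>F t in sequentially. b (Suc t) = b t + B (b t)"
  shows "\<exists>K. \<forall>\<^sub>F t in sequentially. a t \<le> l * b t + K"
proof -
  obtain xA where xA: "\<And>x y. xA \<le> x \<Longrightarrow> x \<le> y \<Longrightarrow> A y \<le> A x" using decA by blast
  obtain xB where xB: "\<And>x y. xB \<le> x \<Longrightarrow> x \<le> y \<Longrightarrow> B y \<le> B x" using decB by blast
  obtain x1 where x1: "\<And>x. x1 \<le> x \<Longrightarrow> 0 \<le> A x \<and> A x \<le> l * B x"
    using eventually_conj[OF A_nonneg A_le] by (auto simp: eventually_at_top_linorder)
  define X where "X = Max {xA, xB, x1, 0}"
  have "\<forall>\<^sub>F t in sequentially. X \<le> a t" "\<forall>\<^sub>F t in sequentially. X \<le> b t"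
    using a_inf b_inf by (simp_all add: filterlim_at_top)
  then have "\<forall>\<^sub>F t in sequentially. X \<le> a t \<and> X \<le> b t \<and>
      a (Suc t) = a t + A (a t) \<and> b (Suc t) = b t + B (b t)"
    using a_rec b_rec by (intro eventually_conj)
  then obtain T where T: "\<And>t. T \<le> t \<Longrightarrow> X \<le> a t \<and> X \<le> b t \<and>
      a (Suc t) = a t + A (a t) \<and> b (Suc t) = b t + B (b t)"
    by (auto simp: eventually_sequentially)
  define c where "c t = l * b t" for t
  have b_le_c: "b t \<le> c t" if "T \<le> t" for t
    using T[OF that] \<open>1 \<le> l\<close> mult_right_mono[of 1 l "b t"] by (simp add: c_def X_def)
  have "a t - c t \<le> max (a T - c T) (A X)" if "T \<le> t" for t
  proof (rule orbit_minus_supersolution_bounded[where x\<^sub>0 = X, OF _ _ _ _ _ that])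
    show "\<And>x y. X \<le> x \<Longrightarrow> x \<le> y \<Longrightarrow> A y \<le> A x" "\<And>x. X \<le> x \<Longrightarrow> 0 \<le> A x"
      using xA x1 by (auto simp: X_def)
    show "X \<le> a t \<and> X \<le> c t" if "T \<le> t" for t
      using T[OF that] b_le_c[OF that] by auto
    show "a (Suc t) = a t + A (a t)" if "T \<le> t" for t
      using T[OF that] by blast
    show "c t + A (c t) \<le> c (Suc t)" if "T \<le> t" for t
      unfolding c_def
    proof (rule scaled_orbit_step_supersolution[where x\<^sub>0 = X])
      show "\<And>u v. X \<le> u \<Longrightarrow> u \<le> v \<Longrightarrow> B v \<le> B u" "\<And>u. X \<le> u \<Longrightarrow> A u \<le> l * B u"
        using xB x1 by (auto simp: X_def)
    qed (use \<open>1 \<le> l\<close> T[OF that] b_le_c[OF that] c_def in auto)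
  qed
  then have "\<forall>t\<ge>T. a t \<le> l * b t + max (a T - c T) (A X)"
    unfolding c_def by (metis add.commute diff_le_eq)
  then show ?thesis
    unfolding eventually_sequentially by blast
qed

lemma eventually_divide_less_of_le_affine:
  fixes a b :: "'a \<Rightarrow> real"
  assumes le: "\<forall>\<^sub>F t in F. a t \<le> l * b t + K" and b_inf: "filterlim b at_top F" and "l < y"
  shows "\<forall>\<^sub>F t in F. a t / b t < y"
proof -
  have "\<forall>\<^sub>F t in F. max 0 (\<bar>K\<bar> / (y - l)) < b t"
    using b_inf filterlim_at_top_dense by blast
  with le show ?thesis
  proof eventually_elim
    case (elim t)
    then have "0 < b t" "\<bar>K\<bar> / (y - l) < b t" by auto
    then have "\<bar>K\<bar> < (y - l) * b t"
      using \<open>l < y\<close> by (simp add: field_simps)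
    with elim have "a t < y * b t" by (simp add: algebra_simps)
    with \<open>0 < b t\<close> show ?case by (simp add: field_simps)
  qed
qed

lemma eventually_le_mult_of_ratio_tendsto_1:
  fixes f g :: "'a \<Rightarrow> real"
  assumes "((\<lambda>x. f x / g x) \<longlongrightarrow> 1) F" and "\<forall>\<^sub>F x in F. 0 < g x" and "1 < l"
  shows "\<forall>\<^sub>F x in F. f x \<le> l * g x"
  using order_tendstoD(2)[OF assms(1,3)] assms(2)
  by eventually_elim (simp add: field_simps)

lemma orbit_ratio_eventually_less:
  fixes A B :: "real \<Rightarrow> real" and a b :: "nat \<Rightarrow> real"
  assumes decA: "\<exists>x0. \<forall>x y. x0 \<le> x \<and> x \<le> y \<longrightarrow> A y \<le> A x"
    and decB: "\<exists>x0. \<forall>x y. x0 \<le> x \<and> x \<le> y \<longrightarrow> B y \<le> B x"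
    and A_nonneg: "\<forall>\<^sub>F x in at_top. 0 \<le> A x" and B_pos: "\<forall>\<^sub>F x in at_top. 0 < B x"
    and ratio: "((\<lambda>x. A x / B x) \<longlongrightarrow> 1) at_top"
    and a_inf: "filterlim a at_top sequentially" and b_inf: "filterlim b at_top sequentially"
    and a_rec: "\<forall>\<^sub>F t in sequentially. a (Suc t) = a t + A (a t)"
    and b_rec: "\<forall>\<^sub>F t in sequentially. b (Suc t) = b t + B (b t)"
    and "1 < y"
  shows "\<forall>\<^sub>F t in sequentially. a t / b t < y"
proof -
  define l where "l = (1 + y) / 2"
  have "1 < l" "l < y" using \<open>1 < y\<close> by (auto simp: l_def)
  have "\<forall>\<^sub>F x in at_top. A x \<le> l * B x"
    using eventually_le_mult_of_ratio_tendsto_1[OF ratio B_pos \<open>1 < l\<close>] .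
  then obtain K where "\<forall>\<^sub>F t in sequentially. a t \<le> l * b t + K"
    using orbit_le_scaled_orbit_plus_const[OF _ decA decB A_nonneg _ a_inf b_inf a_rec b_rec]
      \<open>1 < l\<close> by force
  then show ?thesis
    using eventually_divide_less_of_le_affine b_inf \<open>l < y\<close> by blast
qed

lemma ratio_tendsto_1I:
  fixes f g :: "'a \<Rightarrow> real"
  assumes upper: "\<And>y. 1 < y \<Longrightarrow> \<forall>\<^sub>F t in F. f t / g t < y"
    and lower: "\<And>y. 1 < y \<Longrightarrow> \<forall>\<^sub>F t in F. g t / f t < y"
    and pos: "\<forall>\<^sub>F t in F. 0 < f t \<and> 0 < g t"
  shows "((\<lambda>t. f t / g t) \<longlongrightarrow> 1) F"
proof (rule order_tendstoI)
  fix y :: real assume "y < 1"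
  show "\<forall>\<^sub>F t in F. y < f t / g t"
  proof (cases "0 < y")
    case True
    with \<open>y < 1\<close> have "\<forall>\<^sub>F t in F. g t / f t < 1 / y" by (intro lower) simp
    with pos show ?thesis
      by eventually_elim (use True in \<open>simp add: field_simps\<close>)
  next
    case False
    from pos show ?thesis
    proof eventually_elim
      case (elim t)
      then have "0 < f t / g t" by simp
      with False show ?case by linarith
    qed
  qed
qed (rule upper)

theorem lemma2:
  fixes A B :: "real \<Rightarrow> real" and a b :: "nat \<Rightarrow> real"
  assumes contA: "continuous_on {0<..} A" and contB: "continuous_on {0<..} B"
    and posA: "\<And>x. x > 0 \<Longrightarrow> A x > 0" and posB: "\<And>x. x > 0 \<Longrightarrow> B x > 0"
    and decA: "\<exists>x0. \<forall>x y. x0 \<le> x \<and> x \<le> y \<longrightarrow> A y \<le> A x"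
    and decB: "\<exists>x0. \<forall>x y. x0 \<le> x \<and> x \<le> y \<longrightarrow> B y \<le> B x"
    and limA: "(A \<longlongrightarrow> 0) at_top" and limB: "(B \<longlongrightarrow> 0) at_top"
    and apos: "\<And>t. t \<ge> 1 \<Longrightarrow> a t > 0" and bpos: "\<And>t. t \<ge> 1 \<Longrightarrow> b t > 0"
    and arec: "\<And>t. t \<ge> 1 \<Longrightarrow> a (t + 1) = a t + A (a t)"
    and brec: "\<And>t. t \<ge> 1 \<Longrightarrow> b (t + 1) = b t + B (b t)"
    and ratio: "((\<lambda>x. A x / B x) \<longlongrightarrow> 1) at_top"
  shows "(\<lambda>t. a t / b t) \<longlonglongrightarrow> 1"
proof -
  have a_inf: "filterlim a at_top sequentially"
    using orbit_tendsto_at_top[OF contA posA, of "\<lambda>t. a (Suc t)"] apos arec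
    by (simp add: filterlim_sequentially_Suc)
  have b_inf: "filterlim b at_top sequentially"
    using orbit_tendsto_at_top[OF contB posB, of "\<lambda>t. b (Suc t)"] bpos brec
    by (simp add: filterlim_sequentially_Suc)
  have a_rec: "\<forall>\<^sub>F t in sequentially. a (Suc t) = a t + A (a t)"
    and b_rec: "\<forall>\<^sub>F t in sequentially. b (Suc t) = b t + B (b t)"
    using arec brec by (auto simp: eventually_sequentially intro: exI[of _ 1])
  have A_pos: "\<forall>\<^sub>F x in at_top. 0 < A x" and B_pos: "\<forall>\<^sub>F x in at_top. 0 < B x"
    using posA posB by (auto simp: eventually_at_top_dense)
  have ratio': "((\<lambda>x. B x / A x) \<longlongrightarrow> 1) at_top"
    using tendsto_inverse[OF ratio] by simp
  show ?thesis
  proof (rule ratio_tendsto_1I)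
    show "\<forall>\<^sub>F t in sequentially. a t / b t < y" if "1 < y" for y
      using orbit_ratio_eventually_less[OF decA decB eventually_mono[OF A_pos less_imp_le] B_pos
          ratio a_inf b_inf a_rec b_rec that] .
    show "\<forall>\<^sub>F t in sequentially. b t / a t < y" if "1 < y" for y
      using orbit_ratio_eventually_less[OF decB decA eventually_mono[OF B_pos less_imp_le] A_pos
          ratio' b_inf a_inf b_rec a_rec that] .
    show "\<forall>\<^sub>F t in sequentially. 0 < a t \<and> 0 < b t"
      using apos bpos by (auto simp: eventually_sequentially intro: exI[of _ 1])
  qed
qed

end
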